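(* Any unsound deterministic negotiation contains an anti-pattern (of type $\mathcal{B}$, $\mathcal{F}$ or $\mathcal{C}$).
   Context: A negotiation is a tuple $\mathcal{N}=(\mathit{Proc},N,\mathit{dom},R,\delta)$ where $\mathit{Proc}$ is a finite set of processes, $N$ is a finite set of nodes, $\mathit{dom}:N\to 2^{\mathit{Proc}}\setminus\{\emptyset\}$, there are two distinguished nodes $n_{\mathit{init}},n_{\mathit{fin}}$ with $\mathit{dom}(n_{\mathit{init}})=\mathit{dom}(n_{\mathit{fin}})=\mathit{Proc}$, $R$ is a set of results, each node $n$ has a set $\mathit{out}(n)\subseteq R$ of results (nonempty for $n\neq n_{\mathit{fin}}$), and $\delta(n,a,p)\subseteq N$ is defined and nonempty exactly when $a\in\mathit{out}(n)$ and $p\in\mathit{dom}(n)$, with $p\in\mathit{dom}(n')$ for all $n'\in\delta(n,a,p)$. $\mathcal{N}$ is deterministic if every $\delta(n,a,p)$ is a singleton, identified with its element. A configuration is a map $C$ assigning to each process a nonempty set of nodes; $C_{\mathit{init}}(p)=\{n_{\mathit{init}}\}$, $C_{\mathit{fin}}(p)=\{n_{\mathit{fin}}\}$. A node $n$ is enabled in $C$ if $n\in C(p)$ for all $p\in\mathit{dom}(n)$. If $n$ is enabled and $a\in\mathit{out}(n)$ then $C\xrightarrow{(n,a)}C'$ with $C'(p)=\delta(n,a,p)$ for $p\in\mathit{dom}(n)$, $C'(p)=C(p)$ otherwise. Runs are sequences of such steps; $\mathcal{N}$ is sound if every finite run from $C_{\mathit{init}}$ can be extended to a finite run ending in $C_{\mathit{fin}}$.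 The graph of $\mathcal{N}$ has vertex set $N$ and edges $n\xrightarrow{p,a}n'$ whenever $n'\in\delta(n,a,p)$; a local path is a path in this graph; a $p$-path is a local path all of whose edges are labelled by process $p$; a local circuit is a local path with at least one edge whose first and last nodes coincide. A node $n$ of a local path $\pi$ dominates $\pi$ if $\mathit{dom}(m)\subseteq\mathit{dom}(n)$ for every node $m$ of $\pi$. A tuple $(p_1,p_2,n_1,n_2)\in\mathit{Proc}^2\times N^2$ is a fork of a deterministic $\mathcal{N}$ if there is a local path from $n_{\mathit{init}}$ to a node $n$ and a result $a\in\mathit{out}(n)$ such that $p_i\in\mathit{dom}(n)\cap\mathit{dom}(n_i)$ for $i=1,2$, and for $i=1,2$ there is a $p_i$-path $\pi_i$ from $\delta(n,a,p_i)$ to $n_i$, with $\pi_1,\pi_2$ having no node in common. Anti-patterns: type $\mathcal{B}$: a $p$-path from $n_{\mathit{init}}$ to a node $n$ such that no $p$-path leads from $n$ to $n_{\mathit{fin}}$; type $\mathcal{F}$: a fork $(p_1,p_2,n_1,n_2)$ with $p_2\in\mathit{dom}(n_1)$ and $p_1\in\mathit{dom}(n_2)$; type $\mathcal{C}$: a local circuit without a dominating node. *)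

theory Defs
  imports Main
begin

record ('p, 'n, 'r) negotiation =
  Proc    :: "'p set"
  Nodes   :: "'n set"
  ndom    :: "'n \<Rightarrow> 'p set"
  ninit   :: 'n
  nfin    :: 'n
  Results :: "'r set"
  out     :: "'n \<Rightarrow> 'r set"
  delta   :: "'n \<Rightarrow> 'r \<Rightarrow> 'p \<Rightarrow> 'n set"

text \<open>Well-formedness of a negotiation. delta n a p is only meaningful (defined)
  when a is in out n and p in ndom n; its values elsewhere are never used.\<close>
definition is_negotiation :: "('p, 'n, 'r) negotiation \<Rightarrow> bool" where
  "is_negotiation Ng \<longleftrightarrow>
     finite (Proc Ng) \<and> finite (Nodes Ng) \<and>
     (\<forall>n\<in>Nodes Ng. ndom Ng n \<noteq> {} \<and> ndom Ng n \<subseteq> Proc Ng) \<and>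
     ninit Ng \<in> Nodes Ng \<and> nfin Ng \<in> Nodes Ng \<and>
     ndom Ng (ninit Ng) = Proc Ng \<and> ndom Ng (nfin Ng) = Proc Ng \<and>
     (\<forall>n\<in>Nodes Ng. out Ng n \<subseteq> Results Ng) \<and>
     (\<forall>n\<in>Nodes Ng. n \<noteq> nfin Ng \<longrightarrow> out Ng n \<noteq> {}) \<and>
     (\<forall>n\<in>Nodes Ng. \<forall>a\<in>out Ng n. \<forall>p\<in>ndom Ng n.
        delta Ng n a p \<noteq> {} \<and> delta Ng n a p \<subseteq> Nodes Ng \<and>
        (\<forall>n'\<in>delta Ng n a p. p \<in> ndom Ng n'))"

definition deterministic :: "('p, 'n, 'r) negotiation \<Rightarrow> bool" where
  "deterministic Ng \<longleftrightarrow>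
     (\<forall>n\<in>Nodes Ng. \<forall>a\<in>out Ng n. \<forall>p\<in>ndom Ng n. \<exists>n'. delta Ng n a p = {n'})"

definition dsucc :: "('p, 'n, 'r) negotiation \<Rightarrow> 'n \<Rightarrow> 'r \<Rightarrow> 'p \<Rightarrow> 'n" where
  "dsucc Ng n a p = the_elem (delta Ng n a p)"

text \<open>Configurations are maps from processes to sets of nodes (only values on Proc matter).\<close>
definition C_init :: "('p, 'n, 'r) negotiation \<Rightarrow> 'p \<Rightarrow> 'n set" where
  "C_init Ng = (\<lambda>p. {ninit Ng})"

definition is_final :: "('p, 'n, 'r) negotiation \<Rightarrow> ('p \<Rightarrow> 'n set) \<Rightarrow> bool" where
  "is_final Ng C \<longleftrightarrow> (\<forall>p\<in>Proc Ng. C p = {nfin Ng})"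

definition enabled :: "('p, 'n, 'r) negotiation \<Rightarrow> ('p \<Rightarrow> 'n set) \<Rightarrow> 'n \<Rightarrow> bool" where
  "enabled Ng C n \<longleftrightarrow> n \<in> Nodes Ng \<and> (\<forall>p\<in>ndom Ng n. n \<in> C p)"

definition step :: "('p, 'n, 'r) negotiation \<Rightarrow> ('p \<Rightarrow> 'n set) \<Rightarrow> 'n \<Rightarrow> 'r \<Rightarrow> ('p \<Rightarrow> 'n set) \<Rightarrow> bool" where
  "step Ng C n a C' \<longleftrightarrow> enabled Ng C n \<and> a \<in> out Ng n \<and>
     C' = (\<lambda>p. if p \<in> ndom Ng n then delta Ng n a p else C p)"

definition step_any :: "('p, 'n, 'r) negotiation \<Rightarrow> ('p \<Rightarrow> 'n set) \<Rightarrow> ('p \<Rightarrow> 'n set) \<Rightarrow> bool" where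
  "step_any Ng C C' \<longleftrightarrow> (\<exists>n a. step Ng C n a C')"

definition sound :: "('p, 'n, 'r) negotiation \<Rightarrow> bool" where
  "sound Ng \<longleftrightarrow> (\<forall>C. (step_any Ng)\<^sup>*\<^sup>* (C_init Ng) C \<longrightarrow>
       (\<exists>C'. (step_any Ng)\<^sup>*\<^sup>* C C' \<and> is_final Ng C'))"

definition is_edge :: "('p, 'n, 'r) negotiation \<Rightarrow> 'n \<Rightarrow> 'p \<Rightarrow> 'r \<Rightarrow> 'n \<Rightarrow> bool" where
  "is_edge Ng n p a n' \<longleftrightarrow> n \<in> Nodes Ng \<and> a \<in> out Ng n \<and> p \<in> ndom Ng n \<and> n' \<in> delta Ng n a p"

definition path_P :: "('p, 'n, 'r) negotiation \<Rightarrow> ('p \<Rightarrow> bool) \<Rightarrow> 'n list \<Rightarrow> bool" where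
  "path_P Ng P xs \<longleftrightarrow> xs \<noteq> [] \<and> set xs \<subseteq> Nodes Ng \<and>
     (\<forall>i. Suc i < length xs \<longrightarrow> (\<exists>p a. P p \<and> is_edge Ng (xs ! i) p a (xs ! Suc i)))"

definition local_path :: "('p, 'n, 'r) negotiation \<Rightarrow> 'n list \<Rightarrow> bool" where
  "local_path Ng xs \<longleftrightarrow> path_P Ng (\<lambda>_. True) xs"

definition proc_path :: "('p, 'n, 'r) negotiation \<Rightarrow> 'p \<Rightarrow> 'n list \<Rightarrow> bool" where
  "proc_path Ng p xs \<longleftrightarrow> path_P Ng (\<lambda>q. q = p) xs"

definition local_circuit :: "('p, 'n, 'r) negotiation \<Rightarrow> 'n list \<Rightarrow> bool" where
  "local_circuit Ng xs \<longleftrightarrow> local_path Ng xs \<and> length xs \<ge> 2 \<and> hd xs = last xs"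

definition dominates :: "('p, 'n, 'r) negotiation \<Rightarrow> 'n \<Rightarrow> 'n list \<Rightarrow> bool" where
  "dominates Ng n xs \<longleftrightarrow> n \<in> set xs \<and> (\<forall>m\<in>set xs. ndom Ng m \<subseteq> ndom Ng n)"

definition is_fork :: "('p, 'n, 'r) negotiation \<Rightarrow> 'p \<Rightarrow> 'p \<Rightarrow> 'n \<Rightarrow> 'n \<Rightarrow> bool" where
  "is_fork Ng p1 p2 n1 n2 \<longleftrightarrow>
     (\<exists>n a pi pi1 pi2. local_path Ng pi \<and> hd pi = ninit Ng \<and> last pi = n \<and>
        a \<in> out Ng n \<and>
        p1 \<in> ndom Ng n \<inter> ndom Ng n1 \<and> p2 \<in> ndom Ng n \<inter> ndom Ng n2 \<and>
        proc_path Ng p1 pi1 \<and> hd pi1 = dsucc Ng n a p1 \<and> last pi1 = n1 \<and>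
        proc_path Ng p2 pi2 \<and> hd pi2 = dsucc Ng n a p2 \<and> last pi2 = n2 \<and>
        set pi1 \<inter> set pi2 = {})"

definition antipattern_B :: "('p, 'n, 'r) negotiation \<Rightarrow> bool" where
  "antipattern_B Ng \<longleftrightarrow> (\<exists>p\<in>Proc Ng. \<exists>pi n. proc_path Ng p pi \<and> hd pi = ninit Ng \<and>
      last pi = n \<and> \<not> (\<exists>pi'. proc_path Ng p pi' \<and> hd pi' = n \<and> last pi' = nfin Ng))"

definition antipattern_F :: "('p, 'n, 'r) negotiation \<Rightarrow> bool" where
  "antipattern_F Ng \<longleftrightarrow> (\<exists>p1 p2 n1 n2. is_fork Ng p1 p2 n1 n2 \<and>
      p2 \<in> ndom Ng n1 \<and> p1 \<in> ndom Ng n2)"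

definition antipattern_C :: "('p, 'n, 'r) negotiation \<Rightarrow> bool" where
  "antipattern_C Ng \<longleftrightarrow> (\<exists>pi. local_circuit Ng pi \<and> \<not> (\<exists>n. dominates Ng n pi))"

end

theory Submission
  imports Defs
begin

text \<open>In a deterministic negotiation every reachable configuration places each process on a single
  node, and two processes on different nodes have a common history: a last joint node after which
  each followed its own path without entering a node of the other before its current one. If the
  negotiation is unsound and has no anti-pattern B, finiteness gives a reachable deadlock, since in a
  recurrent configuration with an enabled node some process could be driven to the final node.
  In the deadlock every process p waits for some q in the domain of its node; following q towards
  the final node, the first node involving p must be p's own node, for otherwise the two histories
  form an anti-pattern F. Chasing the waiting relation around a cycle concatenates these paths into a
  local circuit that no node dominates, i.e. an anti-pattern C.\<close>

section \<open>Paths\<close>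

lemma last_append_tl: "xs \<noteq> [] \<Longrightarrow> ys \<noteq> [] \<Longrightarrow> last xs = hd ys \<Longrightarrow> last (xs @ tl ys) = last ys"
  by (cases ys) auto

lemma set_append_tl:
  "xs \<noteq> [] \<Longrightarrow> ys \<noteq> [] \<Longrightarrow> last xs = hd ys \<Longrightarrow> set (xs @ tl ys) = set xs \<union> set ys"
  by (cases ys) auto

lemma in_set_butlast_or_last: "z \<in> set xs \<Longrightarrow> z \<in> set (butlast xs) \<or> z = last xs"
  by (induction xs) auto

lemma path_P_not_Nil: "path_P Ng P xs \<Longrightarrow> xs \<noteq> []"
  by (simp add: path_P_def)

lemma path_P_last_in_Nodes: "path_P Ng P xs \<Longrightarrow> last xs \<in> Nodes Ng"
  unfolding path_P_def using last_in_set by blast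

lemma path_P_singleton: "path_P Ng P [x] \<longleftrightarrow> x \<in> Nodes Ng"
  by (simp add: path_P_def)

lemma path_P_Cons_Cons:
  "path_P Ng P (x # y # zs) \<longleftrightarrow>
     x \<in> Nodes Ng \<and> (\<exists>p a. P p \<and> is_edge Ng x p a y) \<and> path_P Ng P (y # zs)"
  unfolding path_P_def length_Cons Suc_less_eq All_less_Suc2 by auto

lemma path_P_join:
  "path_P Ng P xs \<Longrightarrow> path_P Ng P ys \<Longrightarrow> last xs = hd ys \<Longrightarrow> path_P Ng P (xs @ tl ys)"
proof (induction xs rule: induct_list012)
  case (2 x)
  then show ?case by (cases ys) auto
next
  case (3 x y zs)
  then show ?case by (simp add: path_P_Cons_Cons)
qed (simp add: path_P_def)

lemma proc_path_imp_local_path: "proc_path Ng p xs \<Longrightarrow> local_path Ng xs"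
  unfolding proc_path_def local_path_def path_P_def by blast

lemma local_path_through_segments:
  assumes "\<And>k. local_path Ng (sg k) \<and> hd (sg k) = e (Suc k) \<and> last (sg k) = e k"
  shows "\<exists>xs. local_path Ng xs \<and> hd xs = e t \<and> last xs = e 0 \<and>
    set xs = insert (e 0) (\<Union>k<t. set (sg k)) \<and> (\<forall>k<t. length (sg k) \<le> length xs)"
proof (induction t)
  case 0
  have "local_path Ng (sg 0)" "last (sg 0) = e 0"
    using assms by simp_all
  then have "e 0 \<in> Nodes Ng"
    using path_P_last_in_Nodes unfolding local_path_def by metis
  then show ?case
    by (intro exI[of _ "[e 0]"]) (simp add: local_path_def path_P_singleton)
next
  case (Suc t)
  then obtain xs where xs: "local_path Ng xs" "hd xs = e t" "last xs = e 0"
    "set xs = insert (e 0) (\<Union>k<t. set (sg k))" "\<forall>k<t. length (sg k) \<le> length xs"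
    by blast
  have ne: "sg t \<noteq> []" "xs \<noteq> []"
    using assms xs(1) path_P_not_Nil unfolding local_path_def by blast+
  have join: "last (sg t) = hd xs"
    using assms xs(2) by simp
  have "local_path Ng (sg t @ tl xs)"
    using assms path_P_join xs(1) join unfolding local_path_def by blast
  moreover have "hd (sg t @ tl xs) = e (Suc t)" "last (sg t @ tl xs) = e 0"
    using assms ne(1) last_append_tl[OF ne join] xs(3) by simp_all
  moreover have "set (sg t @ tl xs) = set (sg t) \<union> set xs"
    using ne join by (rule set_append_tl)
  moreover have "length (sg t) \<le> length (sg t @ tl xs)" "length xs \<le> length (sg t @ tl xs)"
    using ne by (cases xs; cases "sg t"; simp)+
  ultimately show ?case
    using xs(4,5) by (intro exI[of _ "sg t @ tl xs"]) (auto simp: lessThan_Suc less_Suc_eq)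
qed

definition avoiding_path ::
    "('p, 'n, 'r) negotiation \<Rightarrow> 'p \<Rightarrow> 'p \<Rightarrow> 'n \<Rightarrow> 'n \<Rightarrow> 'n list \<Rightarrow> bool" where
  "avoiding_path Ng p q x y s \<longleftrightarrow> proc_path Ng p s \<and> hd s = x \<and> last s = y \<and>
     (\<forall>z\<in>set (butlast s). q \<notin> ndom Ng z)"

lemma avoiding_path_not_Nil: "avoiding_path Ng p q x y s \<Longrightarrow> s \<noteq> []"
  unfolding avoiding_path_def proc_path_def by (rule path_P_not_Nil) blast

lemma avoiding_path_singleton: "x \<in> Nodes Ng \<Longrightarrow> avoiding_path Ng p q x x [x]"
  by (simp add: avoiding_path_def proc_path_def path_P_singleton)

lemma avoiding_path_Cons:
  assumes "is_edge Ng x p a y" "q \<notin> ndom Ng x" "avoiding_path Ng p q y z s"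
  shows "avoiding_path Ng p q x z (x # s)"
proof -
  obtain s' where "s = y # s'"
    using avoiding_path_not_Nil[OF assms(3)] assms(3) unfolding avoiding_path_def by (cases s) auto
  then show ?thesis
    using assms unfolding avoiding_path_def proc_path_def
    by (auto simp: path_P_Cons_Cons is_edge_def)
qed

lemma avoiding_path_join:
  assumes "avoiding_path Ng p q x y s" "avoiding_path Ng p q y z t"
  shows "avoiding_path Ng p q x z (s @ tl t)"
proof -
  have s: "s \<noteq> []" and t: "t \<noteq> []"
    using avoiding_path_not_Nil[OF assms(1)] avoiding_path_not_Nil[OF assms(2)] .
  have "proc_path Ng p (s @ tl t)"
    using assms path_P_join unfolding avoiding_path_def proc_path_def by fastforce
  moreover have "set (butlast (s @ tl t)) \<subseteq> set (butlast s) \<union> set (butlast t)"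
  proof (cases "tl t = []")
    case False
    have "last s = hd t"
      using assms unfolding avoiding_path_def by simp
    then have "set s \<subseteq> set (butlast s) \<union> {hd t}"
      using in_set_butlast_or_last[of _ s] by blast
    moreover have "hd t \<in> set (butlast t)"
      using t False by (cases t) auto
    ultimately show ?thesis
      using t False by (cases t) (auto simp: butlast_append)
  qed (auto simp: butlast_append)
  ultimately show ?thesis
    using assms s t unfolding avoiding_path_def by (cases t) (auto simp: last_append)
qed

lemma avoiding_path_hd_in_butlast:
  "avoiding_path Ng p q x y s \<Longrightarrow> x \<noteq> y \<Longrightarrow> x \<in> set (butlast s)"
  unfolding avoiding_path_def proc_path_def by (cases s) (auto simp: path_P_def)

lemma avoiding_path_first_entry:
  "proc_path Ng p g \<Longrightarrow> q \<in> ndom Ng (last g) \<Longrightarrow>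
    \<exists>z s. q \<in> ndom Ng z \<and> avoiding_path Ng p q (hd g) z s"
proof (induction g rule: induct_list012)
  case (2 x)
  then show ?case
    using avoiding_path_singleton by (fastforce simp: proc_path_def path_P_singleton)
next
  case (3 x y zs)
  show ?case
  proof (cases "q \<in> ndom Ng x")
    case True
    then show ?thesis
      using 3 avoiding_path_singleton by (fastforce simp: proc_path_def path_P_Cons_Cons)
  next
    case False
    then show ?thesis
      using 3 avoiding_path_Cons[OF _ False] by (fastforce simp: proc_path_def path_P_Cons_Cons)
  qed
qed (simp add: proc_path_def path_P_def)

section \<open>Cycles and recurrent states\<close>

lemma serial_on_finite_has_cycle:
  assumes "finite A" "a \<in> A" "\<forall>x\<in>A. \<exists>y\<in>A. R x y"
  obtains c L where "0 < L" "c L = c 0" "\<forall>k. c k \<in> A \<and> R (c k) (c (Suc k))"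
proof -
  obtain f where f: "\<forall>x\<in>A. f x \<in> A \<and> R x (f x)"
    using assms(3) by metis
  define ch where "ch k = (f ^^ k) a" for k
  have ch_Suc: "ch (Suc k) = f (ch k)" for k
    unfolding ch_def by simp
  have ch: "ch k \<in> A" for k
    by (induction k) (use assms(2) f in \<open>simp_all add: ch_Suc, simp add: ch_def\<close>)
  have "\<not> inj ch"
    using inj_on_finite[of ch UNIV A] ch assms(1) by blast
  then obtain i j where "i < j" "ch i = ch j"
    unfolding inj_def by (metis linorder_neqE_nat)
  then show thesis
    using that[of "j - i" "\<lambda>k. ch (i + k)"] ch f by (simp add: ch_Suc)
qed

definition recurrent :: "('a \<Rightarrow> 'a \<Rightarrow> bool) \<Rightarrow> 'a \<Rightarrow> bool" where
  "recurrent R x \<longleftrightarrow> (\<forall>y. R\<^sup>*\<^sup>* x y \<longrightarrow> R\<^sup>*\<^sup>* y x)"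

lemma recurrent_rtranclp: "recurrent R x \<Longrightarrow> R\<^sup>*\<^sup>* x y \<Longrightarrow> recurrent R y"
  unfolding recurrent_def by (meson rtranclp_trans)

lemma finite_reachable_imp_recurrent:
  assumes "finite {y. R\<^sup>*\<^sup>* x y}"
  obtains z where "R\<^sup>*\<^sup>* x z" "recurrent R z"
proof -
  define reach where "reach y = {z. R\<^sup>*\<^sup>* y z}" for y
  \<comment> \<open>a state with the fewest successors cannot reach a state from which it is unreachable\<close>
  obtain z where xz: "R\<^sup>*\<^sup>* x z" and least: "\<And>y. R\<^sup>*\<^sup>* x y \<Longrightarrow> card (reach z) \<le> card (reach y)"
    using ex_has_least_nat[of "R\<^sup>*\<^sup>* x" x "\<lambda>y. card (reach y)"] by auto
  have "R\<^sup>*\<^sup>* y z" if zy: "R\<^sup>*\<^sup>* z y" for y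
  proof -
    have "reach y \<subseteq> reach z" "reach z \<subseteq> {y. R\<^sup>*\<^sup>* x y}"
      using zy xz unfolding reach_def by (auto intro: rtranclp_trans)
    moreover have "card (reach z) \<le> card (reach y)"
      using least xz zy by (meson rtranclp_trans)
    ultimately have "reach y = reach z"
      using assms by (meson card_seteq finite_subset)
    then show ?thesis
      unfolding reach_def by auto
  qed
  then show thesis
    using that xz unfolding recurrent_def by blast
qed

section \<open>Reachable configurations\<close>

text \<open>A process sitting on node x can only leave it when x itself fires.\<close>

lemma enabled_before_move:
  assumes "(step_any Ng)\<^sup>*\<^sup>* X G" "step Ng G m b H" "p \<in> ndom Ng m" "X p = {x}"
  shows "\<exists>G'. (step_any Ng)\<^sup>*\<^sup>* X G' \<and> enabled Ng G' x"
  using assms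
proof (induction arbitrary: x rule: converse_rtranclp_induct)
  case base
  then show ?case
    unfolding step_def enabled_def by auto
next
  case (step X Y)
  then obtain m' b' where s: "step Ng X m' b' Y"
    unfolding step_any_def by blast
  show ?case
  proof (cases "p \<in> ndom Ng m'")
    case True
    then show ?thesis
      using s step.prems unfolding step_def enabled_def by auto
  next
    case False
    then have "Y p = {x}"
      using s step.prems unfolding step_def by auto
    then show ?thesis
      using step by (meson converse_rtranclp_into_rtranclp)
  qed
qed

text \<open>Pinning the values outside Proc Ng makes the set of such configurations finite.\<close>
definition local_config :: "('p, 'n, 'r) negotiation \<Rightarrow> ('p \<Rightarrow> 'n set) \<Rightarrow> bool" where
  "local_config Ng X \<longleftrightarrow> (\<forall>p. p \<notin> Proc Ng \<longrightarrow> X p = {ninit Ng}) \<and>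
     (\<forall>p\<in>Proc Ng. \<exists>pi. proc_path Ng p pi \<and> hd pi = ninit Ng \<and> X p = {last pi})"

text \<open>The two avoiding paths of a diverged pair are the branches of a potential fork.\<close>
definition diverged :: "('p, 'n, 'r) negotiation \<Rightarrow> 'p \<Rightarrow> 'p \<Rightarrow> 'n \<Rightarrow> 'n \<Rightarrow> bool" where
  "diverged Ng p q x y \<longleftrightarrow> (\<exists>n a pi s t. local_path Ng pi \<and> hd pi = ninit Ng \<and> last pi = n \<and>
     a \<in> out Ng n \<and> p \<in> ndom Ng n \<and> q \<in> ndom Ng n \<and>
     avoiding_path Ng p q (dsucc Ng n a p) x s \<and> avoiding_path Ng q p (dsucc Ng n a q) y t)"

definition pairwise_diverged :: "('p, 'n, 'r) negotiation \<Rightarrow> ('p \<Rightarrow> 'n set) \<Rightarrow> bool" where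
  "pairwise_diverged Ng X \<longleftrightarrow> (\<forall>p\<in>Proc Ng. \<forall>q\<in>Proc Ng. \<forall>x y.
     X p = {x} \<longrightarrow> X q = {y} \<longrightarrow> x \<noteq> y \<longrightarrow> diverged Ng p q x y)"

lemma diverged_sym: "diverged Ng p q x y \<Longrightarrow> diverged Ng q p y x"
  unfolding diverged_def by blast

abbreviation reachable :: "('p, 'n, 'r) negotiation \<Rightarrow> ('p \<Rightarrow> 'n set) \<Rightarrow> bool" where
  "reachable Ng X \<equiv> (step_any Ng)\<^sup>*\<^sup>* (C_init Ng) X"

locale det_negotiation =
  fixes Ng :: "('p, 'n, 'r) negotiation"
  assumes negotiation: "is_negotiation Ng"
    and det: "deterministic Ng"
begin

lemma edge_target: "is_edge Ng x p a y \<Longrightarrow> y \<in> Nodes Ng \<and> p \<in> ndom Ng y"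
  using negotiation unfolding is_negotiation_def is_edge_def by blast

lemma delta_eq_dsucc:
  "n \<in> Nodes Ng \<Longrightarrow> a \<in> out Ng n \<Longrightarrow> p \<in> ndom Ng n \<Longrightarrow> delta Ng n a p = {dsucc Ng n a p}"
  using det unfolding deterministic_def dsucc_def by fastforce

lemma is_edge_dsucc:
  "n \<in> Nodes Ng \<Longrightarrow> a \<in> out Ng n \<Longrightarrow> p \<in> ndom Ng n \<Longrightarrow> is_edge Ng n p a (dsucc Ng n a p)"
  using delta_eq_dsucc unfolding is_edge_def by blast

lemma proc_path_edge:
  assumes "is_edge Ng x p a y"
  shows "proc_path Ng p [x, y]"
proof -
  have "x \<in> Nodes Ng" "y \<in> Nodes Ng"
    using assms edge_target unfolding is_edge_def by blast+
  then show ?thesis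
    using assms unfolding proc_path_def path_P_Cons_Cons path_P_singleton by blast
qed

lemma avoiding_path_edge:
  assumes "is_edge Ng x p a y" "q \<notin> ndom Ng x"
  shows "avoiding_path Ng p q x y [x, y]"
  using avoiding_path_Cons[OF assms avoiding_path_singleton] edge_target[OF assms(1)] by blast

lemma proc_path_in_ndom:
  "proc_path Ng p s \<Longrightarrow> p \<in> ndom Ng (hd s) \<Longrightarrow> z \<in> set s \<Longrightarrow> p \<in> ndom Ng z"
proof (induction s rule: induct_list012)
  case (3 x y zs)
  then show ?case
    using edge_target by (auto simp: proc_path_def path_P_Cons_Cons)
qed auto

lemma ndom_subset_Proc: "n \<in> Nodes Ng \<Longrightarrow> ndom Ng n \<subseteq> Proc Ng"
  using negotiation unfolding is_negotiation_def by blast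

lemma ndom_ninit: "ndom Ng (ninit Ng) = Proc Ng"
  using negotiation unfolding is_negotiation_def by blast

lemma ndom_nfin: "ndom Ng (nfin Ng) = Proc Ng"
  using negotiation unfolding is_negotiation_def by blast

lemma local_configE:
  assumes "local_config Ng X" "p \<in> Proc Ng"
  obtains x pi where "X p = {x}" "proc_path Ng p pi" "hd pi = ninit Ng" "last pi = x"
    "x \<in> Nodes Ng" "p \<in> ndom Ng x"
proof -
  obtain pi where pi: "proc_path Ng p pi" "hd pi = ninit Ng" "X p = {last pi}"
    using assms unfolding local_config_def by blast
  have "pi \<noteq> []" "set pi \<subseteq> Nodes Ng"
    using pi(1) unfolding proc_path_def path_P_def by auto
  then have "last pi \<in> Nodes Ng" "p \<in> ndom Ng (last pi)"
    using pi proc_path_in_ndom ndom_ninit assms(2) by auto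
  then show thesis
    using that pi by blast
qed

lemma local_config_position:
  assumes "local_config Ng X" "p \<in> Proc Ng"
  shows "X p = {the_elem (X p)} \<and> the_elem (X p) \<in> Nodes Ng \<and> p \<in> ndom Ng (the_elem (X p))"
proof -
  obtain x pi where "X p = {x}" "proc_path Ng p pi" "hd pi = ninit Ng" "last pi = x"
    "x \<in> Nodes Ng" "p \<in> ndom Ng x"
    using local_configE[OF assms] .
  then show ?thesis
    by simp
qed

lemma step_node: "step Ng X m b X' \<Longrightarrow> m \<in> Nodes Ng"
  unfolding step_def enabled_def by blast

lemma step_holder: "step Ng X m b X' \<Longrightarrow> p \<in> ndom Ng m \<Longrightarrow> X p = {x} \<Longrightarrow> x = m"
  unfolding step_def enabled_def by auto

lemma step_moved:
  assumes "step Ng X m b X'" "p \<in> ndom Ng m"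
  shows "X' p = {dsucc Ng m b p} \<and> is_edge Ng m p b (dsucc Ng m b p)"
proof -
  have "m \<in> Nodes Ng" "b \<in> out Ng m"
    using assms(1) unfolding step_def enabled_def by blast+
  then show ?thesis
    using assms delta_eq_dsucc is_edge_dsucc unfolding step_def by simp
qed

lemma step_unmoved: "step Ng X m b X' \<Longrightarrow> p \<notin> ndom Ng m \<Longrightarrow> X' p = X p"
  unfolding step_def by auto

lemma local_config_init: "local_config Ng (C_init Ng)"
proof -
  have "proc_path Ng p [ninit Ng]" for p
    using negotiation unfolding is_negotiation_def proc_path_def path_P_singleton by blast
  then show ?thesis
    unfolding local_config_def C_init_def by force
qed

lemma local_config_step:
  assumes X: "local_config Ng X" and s: "step Ng X m b X'"
  shows "local_config Ng X'"
  unfolding local_config_def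
proof (intro conjI allI impI ballI)
  fix p
  assume "p \<notin> Proc Ng"
  then have "p \<notin> ndom Ng m"
    using ndom_subset_Proc[OF step_node[OF s]] by blast
  then show "X' p = {ninit Ng}"
    using X \<open>p \<notin> Proc Ng\<close> step_unmoved[OF s] unfolding local_config_def by simp
next
  fix p
  assume p: "p \<in> Proc Ng"
  obtain x pi where pi: "X p = {x}" "proc_path Ng p pi" "hd pi = ninit Ng" "last pi = x"
    using local_configE[OF X p] .
  show "\<exists>pi. proc_path Ng p pi \<and> hd pi = ninit Ng \<and> X' p = {last pi}"
  proof (cases "p \<in> ndom Ng m")
    case True
    let ?y = "dsucc Ng m b p"
    have "x = m" and y: "X' p = {?y}" "is_edge Ng m p b ?y"
      using step_holder[OF s True pi(1)] step_moved[OF s True] by auto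
    then have "proc_path Ng p [x, ?y]"
      using proc_path_edge by simp
    then have "proc_path Ng p (pi @ [?y])"
      using path_P_join[of Ng _ pi "[x, ?y]"] pi unfolding proc_path_def by simp
    moreover have "hd (pi @ [?y]) = ninit Ng"
      using pi(2,3) path_P_not_Nil[of Ng _ pi] unfolding proc_path_def by simp
    ultimately show ?thesis
      using y by (metis last_snoc)
  next
    case False
    then show ?thesis
      using pi step_unmoved[OF s] by auto
  qed
qed

lemma avoiding_paths_disjoint:
  assumes s: "avoiding_path Ng p q x1 y1 s" "p \<in> ndom Ng x1"
    and t: "avoiding_path Ng q p x2 y2 t" "q \<in> ndom Ng x2"
    and "y1 \<noteq> y2"
  shows "set s \<inter> set t = {}"
proof -
  have "z = y2" "z = y1" if "z \<in> set s" "z \<in> set t" for z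
  proof -
    have "p \<in> ndom Ng z" "q \<in> ndom Ng z"
      using that s t proc_path_in_ndom unfolding avoiding_path_def by blast+
    then show "z = y2" "z = y1"
      using that s t in_set_butlast_or_last unfolding avoiding_path_def by metis+
  qed
  then show ?thesis
    using \<open>y1 \<noteq> y2\<close> by blast
qed

lemma diverged_at_split:
  assumes "local_path Ng pi" "hd pi = ninit Ng" "last pi = n"
    and "a \<in> out Ng n" "p \<in> ndom Ng n" "q \<in> ndom Ng n"
  shows "diverged Ng p q (dsucc Ng n a p) (dsucc Ng n a q)"
proof -
  have n: "n \<in> Nodes Ng"
    using path_P_last_in_Nodes assms(1,3) unfolding local_path_def by blast
  have "dsucc Ng n a r \<in> Nodes Ng" if "r \<in> ndom Ng n" for r
    using edge_target[OF is_edge_dsucc[OF n assms(4) that]] by blast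
  then show ?thesis
    unfolding diverged_def using assms
    by (intro exI[of _ n] exI[of _ a] exI[of _ pi] exI[of _ "[dsucc Ng n a p]"]
        exI[of _ "[dsucc Ng n a q]"] conjI avoiding_path_singleton) simp_all
qed

lemma diverged_advance:
  assumes "diverged Ng p q x y" "q \<notin> ndom Ng x" "is_edge Ng x p b x'"
  shows "diverged Ng p q x' y"
proof -
  obtain n a pi s t where "local_path Ng pi" "hd pi = ninit Ng" "last pi = n" "a \<in> out Ng n"
    "p \<in> ndom Ng n" "q \<in> ndom Ng n" "avoiding_path Ng p q (dsucc Ng n a p) x s"
    "avoiding_path Ng q p (dsucc Ng n a q) y t"
    using assms(1) unfolding diverged_def by blast
  then show ?thesis
    unfolding diverged_def using avoiding_path_join[OF _ avoiding_path_edge[OF assms(3,2)]]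
    by (intro exI[of _ n] exI[of _ a] exI[of _ pi] exI[of _ "s @ [x']"] exI[of _ t]) simp
qed

lemma pairwise_diverged_init: "pairwise_diverged Ng (C_init Ng)"
  unfolding pairwise_diverged_def C_init_def by simp

lemma diverged_after_step:
  assumes X: "local_config Ng X" "pairwise_diverged Ng X" and s: "step Ng X m b X'"
    and p: "p \<in> Proc Ng" "p \<in> ndom Ng m" and q: "q \<in> Proc Ng"
    and x': "X' p = {x'}" and y': "X' q = {y'}" and "x' \<noteq> y'"
  shows "diverged Ng p q x' y'"
proof -
  obtain x pi where pi: "X p = {x}" "proc_path Ng p pi" "hd pi = ninit Ng" "last pi = x"
    using local_configE[OF X(1) p(1)] .
  have "x = m" "x' = dsucc Ng m b p" and e: "is_edge Ng m p b x'"
    using step_holder[OF s p(2) pi(1)] step_moved[OF s p(2)] x' by auto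
  show ?thesis
  proof (cases "q \<in> ndom Ng m")
    case True
    then have "y' = dsucc Ng m b q"
      using step_moved[OF s] y' by simp
    moreover have "b \<in> out Ng m"
      using e unfolding is_edge_def by blast
    ultimately show ?thesis
      using diverged_at_split[OF proc_path_imp_local_path[OF pi(2)] pi(3)] p(2) True
        \<open>x = m\<close> \<open>x' = dsucc Ng m b p\<close> pi(4) by simp
  next
    case False
    obtain y pi' where y: "X q = {y}" "proc_path Ng q pi'" "hd pi' = ninit Ng" "last pi' = y"
      "y \<in> Nodes Ng" "q \<in> ndom Ng y"
      using local_configE[OF X(1) q] .
    then have "y = y'"
      using step_unmoved[OF s False] y' by simp
    then have "diverged Ng p q m y'"
      using X(2) p q pi(1) y \<open>x = m\<close> False unfolding pairwise_diverged_def by blast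
    then show ?thesis
      using diverged_advance False e by blast
  qed
qed

lemma pairwise_diverged_step:
  assumes X: "local_config Ng X" "pairwise_diverged Ng X" and s: "step Ng X m b X'"
  shows "pairwise_diverged Ng X'"
  unfolding pairwise_diverged_def
proof (intro ballI allI impI)
  fix p q x' y'
  assume p: "p \<in> Proc Ng" and q: "q \<in> Proc Ng"
    and x': "X' p = {x'}" and y': "X' q = {y'}" and "x' \<noteq> y'"
  consider "p \<in> ndom Ng m" | "q \<in> ndom Ng m" | "p \<notin> ndom Ng m" "q \<notin> ndom Ng m"
    by blast
  then show "diverged Ng p q x' y'"
  proof cases
    case 1
    show ?thesis
      by (rule diverged_after_step[OF X s p 1 q x' y' \<open>x' \<noteq> y'\<close>])
  next
    case 2
    show ?thesis
      by (rule diverged_sym[OF diverged_after_step[OF X s q 2 p y' x']])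
        (use \<open>x' \<noteq> y'\<close> in simp)
  next
    case 3
    then show ?thesis
      using X(2) p q x' y' \<open>x' \<noteq> y'\<close> step_unmoved[OF s] unfolding pairwise_diverged_def by simp
  qed
qed

lemma reachable_invariants: "reachable Ng X \<Longrightarrow> local_config Ng X \<and> pairwise_diverged Ng X"
proof (induction rule: rtranclp_induct)
  case base
  then show ?case
    using local_config_init pairwise_diverged_init by blast
next
  case (step Y Z)
  then show ?case
    using local_config_step pairwise_diverged_step unfolding step_any_def by blast
qed

section \<open>Deadlocks\<close>

lemma finite_local_configs: "finite {X. local_config Ng X}"
proof -
  let ?B = "(\<lambda>x. {x}) ` Nodes Ng"
  have sub: "{X. local_config Ng X} \<subseteq>
      {X. \<forall>p. (p \<in> Proc Ng \<longrightarrow> X p \<in> ?B) \<and> (p \<notin> Proc Ng \<longrightarrow> X p = {ninit Ng})}"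
  proof (intro subsetI CollectI allI conjI impI)
    fix X p
    assume "X \<in> {X. local_config Ng X}"
    then have X: "local_config Ng X"
      by simp
    show "X p \<in> ?B" if "p \<in> Proc Ng"
      using local_config_position[OF X that] by blast
    show "X p = {ninit Ng}" if "p \<notin> Proc Ng"
      using X that unfolding local_config_def by blast
  qed
  have "finite (Proc Ng)" "finite ?B"
    using negotiation unfolding is_negotiation_def by auto
  then show ?thesis
    by (rule finite_subset[OF sub finite_set_of_finite_funs])
qed

lemma enabled_nfin_imp_final:
  assumes X: "local_config Ng X" and "enabled Ng X (nfin Ng)"
  shows "is_final Ng X"
  unfolding is_final_def
proof
  fix p
  assume p: "p \<in> Proc Ng"
  then have "nfin Ng \<in> X p"
    using assms(2) ndom_nfin unfolding enabled_def by blast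
  then show "X p = {nfin Ng}"
    using local_config_position[OF X p] by (metis singletonD)
qed

lemma advance_along_edge:
  assumes "(step_any Ng)\<^sup>*\<^sup>* D G" "step Ng G m b H" "p \<in> ndom Ng m" "D p = {x}"
    and e: "is_edge Ng x p a y"
  shows "\<exists>F. (step_any Ng)\<^sup>*\<^sup>* D F \<and> F p = {y}"
proof -
  obtain G' where G': "(step_any Ng)\<^sup>*\<^sup>* D G'" "enabled Ng G' x"
    using enabled_before_move[OF assms(1-4)] by blast
  define F where "F q = (if q \<in> ndom Ng x then delta Ng x a q else G' q)" for q
  have "step Ng G' x a F"
    using G'(2) e unfolding step_def F_def is_edge_def by blast
  then have "(step_any Ng)\<^sup>*\<^sup>* D F"
    using rtranclp.rtrancl_into_rtrancl[OF G'(1)] unfolding step_any_def by blast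
  moreover have "F p = {y}"
    using e delta_eq_dsucc unfolding F_def is_edge_def by auto
  ultimately show ?thesis
    by blast
qed

lemma recurrent_advance_along_path:
  assumes "recurrent (step_any Ng) D" "(step_any Ng)\<^sup>*\<^sup>* D G" "step Ng G m b H" "p \<in> ndom Ng m"
    and "proc_path Ng p g" "D p = {hd g}"
  shows "\<exists>F. (step_any Ng)\<^sup>*\<^sup>* D F \<and> F p = {last g}"
  using assms
proof (induction g arbitrary: D rule: induct_list012)
  case (3 x y zs)
  obtain a where e: "is_edge Ng x p a y" and g: "proc_path Ng p (y # zs)"
    using "3.prems"(5) unfolding proc_path_def path_P_Cons_Cons by blast
  obtain F where DF: "(step_any Ng)\<^sup>*\<^sup>* D F" and F: "F p = {y}"
    using advance_along_edge[OF "3.prems"(2-4) _ e] "3.prems"(6) by auto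
  have F_rec: "recurrent (step_any Ng) F"
    by (rule recurrent_rtranclp[OF "3.prems"(1) DF])
  have "(step_any Ng)\<^sup>*\<^sup>* F D"
    using "3.prems"(1) DF unfolding recurrent_def by blast
  then have FG: "(step_any Ng)\<^sup>*\<^sup>* F G"
    using "3.prems"(2) by (rule rtranclp_trans)
  obtain F' where "(step_any Ng)\<^sup>*\<^sup>* F F'" "F' p = {last (y # zs)}"
    using "3.IH"(2)[OF F_rec FG "3.prems"(3,4) g] F by auto
  then show ?case
    using rtranclp_trans[OF DF] by (metis last_ConsR list.distinct(1))
qed (auto simp: proc_path_def path_P_def)

lemma recurrent_enabled_reaches_final:
  assumes noB: "\<not> antipattern_B Ng" and D: "reachable Ng D" "recurrent (step_any Ng) D"
    and n: "enabled Ng D n"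
  shows "\<exists>F. (step_any Ng)\<^sup>*\<^sup>* D F \<and> is_final Ng F"
proof -
  have final: "is_final Ng F" if "(step_any Ng)\<^sup>*\<^sup>* D F" "enabled Ng F (nfin Ng)" for F
    using enabled_nfin_imp_final reachable_invariants rtranclp_trans[OF D(1)] that by blast
  show ?thesis
  proof (cases "n = nfin Ng")
    case True
    then show ?thesis
      using final n by blast
  next
    case False
    have nN: "n \<in> Nodes Ng"
      using n unfolding enabled_def by blast
    then obtain b p where b: "b \<in> out Ng n" and p: "p \<in> ndom Ng n"
      using negotiation False unfolding is_negotiation_def by blast
    define E where "E q = (if q \<in> ndom Ng n then delta Ng n b q else D q)" for q
    have s: "step Ng D n b E"
      using n b unfolding step_def E_def by blast
    have pP: "p \<in> Proc Ng"
      using ndom_subset_Proc[OF nN] p by blast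
    obtain x pi where x: "D p = {x}" "proc_path Ng p pi" "hd pi = ninit Ng" "last pi = x"
      using local_configE[OF conjunct1[OF reachable_invariants[OF D(1)]] pP] .
    obtain g where g: "proc_path Ng p g" "hd g = x" "last g = nfin Ng"
      using noB pP x unfolding antipattern_B_def by blast
    obtain F where DF: "(step_any Ng)\<^sup>*\<^sup>* D F" and F: "F p = {nfin Ng}"
      using recurrent_advance_along_path[OF D(2) rtranclp.rtrancl_refl s p g(1)] g x(1) by auto
    have FD: "(step_any Ng)\<^sup>*\<^sup>* F D"
      using D(2) DF unfolding recurrent_def by blast
    then obtain G where "(step_any Ng)\<^sup>*\<^sup>* F G" "enabled Ng G (nfin Ng)"
      using enabled_before_move[OF FD s p F] by blast
    then show ?thesis
      using final DF by (meson rtranclp_trans)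
  qed
qed

lemma unsound_imp_reachable_deadlock:
  assumes "\<not> antipattern_B Ng" "\<not> sound Ng"
  obtains D where "reachable Ng D" "\<forall>n. \<not> enabled Ng D n"
proof -
  obtain C where C: "reachable Ng C" and not_final: "\<And>F. (step_any Ng)\<^sup>*\<^sup>* C F \<Longrightarrow> \<not> is_final Ng F"
    using assms(2) unfolding sound_def by blast
  have "{Y. (step_any Ng)\<^sup>*\<^sup>* C Y} \<subseteq> {X. local_config Ng X}"
    using C reachable_invariants by (blast intro: rtranclp_trans)
  then obtain D where CD: "(step_any Ng)\<^sup>*\<^sup>* C D" and D: "recurrent (step_any Ng) D"
    using finite_reachable_imp_recurrent finite_local_configs finite_subset by metis
  have "\<not> enabled Ng D n" for n
    using recurrent_enabled_reaches_final[OF assms(1) rtranclp_trans[OF C CD] D] not_final CD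
    by (meson rtranclp_trans)
  then show thesis
    using that C CD by (meson rtranclp_trans)
qed

section \<open>Waiting cycles\<close>

lemma diverged_extension_imp_F:
  assumes "diverged Ng p q x y" "avoiding_path Ng q p y z u"
    and "q \<in> ndom Ng x" "p \<in> ndom Ng z" "z \<noteq> x"
  shows "antipattern_F Ng"
proof -
  obtain n a pi s t where pi: "local_path Ng pi" "hd pi = ninit Ng" "last pi = n"
    and a: "a \<in> out Ng n" and pq: "p \<in> ndom Ng n" "q \<in> ndom Ng n"
    and s: "avoiding_path Ng p q (dsucc Ng n a p) x s"
    and t: "avoiding_path Ng q p (dsucc Ng n a q) y t"
    using assms(1) unfolding diverged_def by blast
  have tu: "avoiding_path Ng q p (dsucc Ng n a q) z (t @ tl u)"
    using avoiding_path_join[OF t assms(2)] .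
  have n: "n \<in> Nodes Ng"
    using path_P_last_in_Nodes pi(1,3) unfolding local_path_def by blast
  have succ: "p \<in> ndom Ng (dsucc Ng n a p)" "q \<in> ndom Ng (dsucc Ng n a q)"
    using edge_target is_edge_dsucc[OF n a] pq by blast+
  have "set s \<inter> set (t @ tl u) = {}"
    using avoiding_paths_disjoint[OF s succ(1) tu succ(2)] assms(5) by blast
  moreover have "p \<in> ndom Ng x" "q \<in> ndom Ng z"
    using s tu succ proc_path_in_ndom last_in_set path_P_not_Nil
    unfolding avoiding_path_def proc_path_def by metis+
  ultimately have "is_fork Ng p q x z"
    using pi a pq s tu unfolding is_fork_def avoiding_path_def by blast
  then show ?thesis
    using assms(3,4) unfolding antipattern_F_def by blast
qed

lemma deadlock_waiting:
  assumes noB: "\<not> antipattern_B Ng" and noF: "\<not> antipattern_F Ng"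
    and D: "reachable Ng D" "\<forall>n. \<not> enabled Ng D n" and p: "p \<in> Proc Ng"
  shows "\<exists>q\<in>Proc Ng. the_elem (D q) \<noteq> the_elem (D p) \<and>
    (\<exists>s. avoiding_path Ng q p (the_elem (D q)) (the_elem (D p)) s)"
proof -
  have inv: "local_config Ng D" "pairwise_diverged Ng D"
    using reachable_invariants[OF D(1)] by blast+
  define x where "x = the_elem (D p)"
  have x: "D p = {x}" "x \<in> Nodes Ng" "p \<in> ndom Ng x"
    using local_config_position[OF inv(1) p] unfolding x_def by blast+
  then obtain q where q: "q \<in> ndom Ng x" "x \<notin> D q"
    using D(2) unfolding enabled_def by blast
  have qP: "q \<in> Proc Ng"
    using ndom_subset_Proc[OF x(2)] q(1) by blast
  obtain y pi where y: "D q = {y}" "proc_path Ng q pi" "hd pi = ninit Ng" "last pi = y"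
    "y \<in> Nodes Ng" "q \<in> ndom Ng y"
    using local_configE[OF inv(1) qP] .
  have "y \<noteq> x"
    using q(2) y(1) by blast
  obtain g where g: "proc_path Ng q g" "hd g = y" "last g = nfin Ng"
    using noB qP y(2-4) unfolding antipattern_B_def by blast
  then obtain z u where z: "p \<in> ndom Ng z" "avoiding_path Ng q p y z u"
    using avoiding_path_first_entry[of Ng q g p] ndom_nfin p by auto
  have "z = x"
  proof (rule ccontr)
    \<comment> \<open>otherwise the histories of p and q form a fork\<close>
    assume "z \<noteq> x"
    moreover have "diverged Ng p q x y"
      using inv(2) p qP x(1) y(1) \<open>y \<noteq> x\<close> unfolding pairwise_diverged_def by blast
    ultimately show False
      using diverged_extension_imp_F z q(1) noF by blast
  qed
  moreover have "the_elem (D q) = y"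
    using y(1) by simp
  ultimately have "\<exists>q\<in>Proc Ng. the_elem (D q) \<noteq> x \<and> (\<exists>s. avoiding_path Ng q p (the_elem (D q)) x s)"
    using qP z(2) \<open>y \<noteq> x\<close> by blast
  then show ?thesis
    unfolding x_def .
qed

lemma waiting_segments_circuit:
  assumes L: "0 < L" "e L = e 0"
    and sg: "\<And>k. avoiding_path Ng (c (Suc k)) (c k) (e (Suc k)) (e k) (sg k)"
    and e: "\<And>k. e (Suc k) \<noteq> e k"
  obtains xs where "local_circuit Ng xs" "set xs = insert (e 0) (\<Union>k<L. set (sg k))"
proof -
  have "local_path Ng (sg k) \<and> hd (sg k) = e (Suc k) \<and> last (sg k) = e k" for k
    using sg[of k] unfolding avoiding_path_def by (blast intro: proc_path_imp_local_path)
  from local_path_through_segments[of Ng sg e L, OF this]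
  obtain xs where xs: "local_path Ng xs" "hd xs = e L" "last xs = e 0"
    "set xs = insert (e 0) (\<Union>k<L. set (sg k))" "\<forall>k<L. length (sg k) \<le> length xs"
    by blast
  have "2 \<le> length (sg (L - 1))"
    using avoiding_path_hd_in_butlast[OF sg e, of "L - 1"]
    by (cases "sg (L - 1)" rule: rev_cases) (auto simp: Suc_le_eq length_pos_if_in_set)
  moreover have "length (sg (L - 1)) \<le> length xs"
    using xs(5) L(1) by simp
  ultimately have "local_circuit Ng xs"
    using xs(1-3) L(2) unfolding local_circuit_def by simp
  then show thesis
    using that xs(4) by blast
qed

lemma undominated_waiting_circuit:
  assumes L: "0 < L" "e L = e 0" and c: "\<And>k. c k \<in> ndom Ng (e k)"
    and sg: "\<And>k. avoiding_path Ng (c (Suc k)) (c k) (e (Suc k)) (e k) (sg k)"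
    and e: "\<And>k. e (Suc k) \<noteq> e k"
  shows "antipattern_C Ng"
proof -
  obtain xs where circuit: "local_circuit Ng xs"
    and xs: "set xs = insert (e 0) (\<Union>k<L. set (sg k))"
    using waiting_segments_circuit[OF L sg e] .
  have "\<not> dominates Ng m xs" for m
  proof
    assume "dominates Ng m xs"
    then have m: "m \<in> set xs" and dom: "\<And>y. y \<in> set xs \<Longrightarrow> ndom Ng y \<subseteq> ndom Ng m"
      unfolding dominates_def by blast+
    have "e k \<in> set (sg k)" for k
      using sg[of k] avoiding_path_not_Nil[OF sg] last_in_set unfolding avoiding_path_def by metis
    then have cm: "c k \<in> ndom Ng m" if "k < L" for k
      using that xs dom c by blast
    \<comment> \<open>m is the node of some waiting process, yet it lies strictly inside the path of
      the process waited for, which avoids the waiting one\<close>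
    obtain j where j: "j < L" "m = e (Suc j)"
    proof (cases "m = e 0")
      case True
      then show thesis
        using that[of "L - 1"] L by simp
    next
      case False
      then obtain k where k: "k < L" "m \<in> set (sg k)"
        using m xs by blast
      then have "m \<notin> set (butlast (sg k))"
        using sg[of k] cm[OF k(1)] unfolding avoiding_path_def by blast
      then have "m = e k"
        using in_set_butlast_or_last[OF k(2)] sg[of k] unfolding avoiding_path_def by simp
      moreover have "0 < k"
        using False calculation by (metis gr0I)
      ultimately show thesis
        using that[of "k - 1"] k(1) by simp
    qed
    then have "c j \<notin> ndom Ng m"
      using sg[of j] avoiding_path_hd_in_butlast[OF sg e, of j] unfolding avoiding_path_def by blast
    then show False
      using cm j(1) by blast
  qed
  then show ?thesis
    using circuit unfolding antipattern_C_def by blast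
qed

lemma waiting_imp_C:
  assumes d: "\<forall>p\<in>Proc Ng. p \<in> ndom Ng (d p)"
    and wait: "\<forall>p\<in>Proc Ng. \<exists>q\<in>Proc Ng. d q \<noteq> d p \<and> (\<exists>s. avoiding_path Ng q p (d q) (d p) s)"
  shows "antipattern_C Ng"
proof -
  have fin: "finite (Proc Ng)" and "ndom Ng (ninit Ng) \<noteq> {}"
    using negotiation unfolding is_negotiation_def by blast+
  then obtain p0 where p0: "p0 \<in> Proc Ng"
    using ndom_ninit by blast
  obtain c L where L: "0 < L" "c L = c 0"
    and cycle: "\<forall>k. c k \<in> Proc Ng \<and> d (c (Suc k)) \<noteq> d (c k) \<and>
      (\<exists>s. avoiding_path Ng (c (Suc k)) (c k) (d (c (Suc k))) (d (c k)) s)"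
    by (rule serial_on_finite_has_cycle[OF fin p0 wait])
  then obtain sg where "\<forall>k. avoiding_path Ng (c (Suc k)) (c k) (d (c (Suc k))) (d (c k)) (sg k)"
    by metis
  then show ?thesis
    using undominated_waiting_circuit[of L "\<lambda>k. d (c k)" c sg] L cycle d by simp
qed

end

theorem lemma3p10:
  fixes Ng :: "('p, 'n, 'r) negotiation"
  assumes "is_negotiation Ng"
    and "deterministic Ng"
    and "\<not> sound Ng"
  shows "antipattern_B Ng \<or> antipattern_F Ng \<or> antipattern_C Ng"
proof (rule ccontr)
  assume "\<not> (antipattern_B Ng \<or> antipattern_F Ng \<or> antipattern_C Ng)"
  then have noB: "\<not> antipattern_B Ng" and noF: "\<not> antipattern_F Ng" and noC: "\<not> antipattern_C Ng"
    by auto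
  interpret det_negotiation Ng
    using assms(1,2) by unfold_locales
  obtain D where D: "reachable Ng D" "\<forall>n. \<not> enabled Ng D n"
    using unsound_imp_reachable_deadlock[OF noB assms(3)] by blast
  have "antipattern_C Ng"
  proof (rule waiting_imp_C)
    show "\<forall>p\<in>Proc Ng. p \<in> ndom Ng (the_elem (D p))"
      using local_config_position reachable_invariants[OF D(1)] by blast
    show "\<forall>p\<in>Proc Ng. \<exists>q\<in>Proc Ng. the_elem (D q) \<noteq> the_elem (D p) \<and>
        (\<exists>s. avoiding_path Ng q p (the_elem (D q)) (the_elem (D p)) s)"
      using deadlock_waiting[OF noB noF D] by blast
  qed
  with noC show False
    by contradiction
qed

end
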